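(* Let $p$ be a non-negative integer. For any integer $m$ and $-\pi<\arg\zeta<\pi$, $$S_{-2p-1,0}(\zeta\mathrm{e}^{-m\pi i})=S_{-2p-1,0}(\zeta)+\frac{(-1)^pK''_+}{2^{2p}(p!)^2}H^{(1)}_0(\zeta)+\frac{(-1)^pK''_-}{2^{2p}(p!)^2}H^{(2)}_0(\zeta),\qquad K''_\pm=-\frac{m\pi^2(m\pm1)}{4}.$$
   Context: $J_0,Y_0$ are Bessel functions of order $0$, $H^{(1)}_0=J_0+iY_0$, $H^{(2)}_0=J_0-iY_0$, $\psi=\Gamma'/\Gamma$, $(a)_k=a(a+1)\cdots(a+k-1)$. Lommel functions: $S_{-1,0}(\zeta)=\frac12\sum_{k\ge0}\frac{(-1)^k(\zeta/2)^{2k}}{(k!)^2}\big\{[\log\frac{\zeta}{2}-\psi(k+1)]^2-\frac12\psi'(k+1)+\frac{\pi^2}{4}\big\}$ and $S_{-2p-1,0}(\zeta)=\sum_{j=0}^{p-1}\frac{(-1)^j\zeta^{-2p+2j}}{2^{2j+2}(-p)_{j+1}(-p)_{j+1}}+\frac{(-1)^pS_{-1,0}(\zeta)}{2^{2p}(p!)^2}$. Right-hand side functions are on the principal branch $-\pi<\arg\zeta<\pi$; $g(\zeta\mathrm{e}^{-m\pi i})$ is the value of the analytic continuation of the principal branch at the point over $\zeta$ with argument $\arg\zeta-m\pi$. *)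

theory Defs
  imports "HOL-Analysis.Analysis"
begin

(* Principal branches (complex logarithm Ln: -pi < Im (Ln z) <= pi); used for -pi < arg z < pi. *)

definition besselJ0 :: "complex \<Rightarrow> complex" where
  "besselJ0 z = (\<Sum>k. (-1) ^ k * (z / 2) ^ (2 * k) / (of_nat (fact k)) ^ 2)"

definition besselY0 :: "complex \<Rightarrow> complex" where
  "besselY0 z = (2 / complex_of_real pi) *
     (\<Sum>k. (-1) ^ k * (z / 2) ^ (2 * k) / (of_nat (fact k)) ^ 2
            * (Ln (z / 2) - Digamma (of_nat (k + 1))))"

definition hankel1_0 :: "complex \<Rightarrow> complex" where
  "hankel1_0 z = besselJ0 z + \<i> * besselY0 z"

definition hankel2_0 :: "complex \<Rightarrow> complex" where
  "hankel2_0 z = besselJ0 z - \<i> * besselY0 z"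

definition lommelS_m1 :: "complex \<Rightarrow> complex" where
  "lommelS_m1 z = (1/2) * (\<Sum>k. (-1) ^ k * (z / 2) ^ (2 * k) / (of_nat (fact k)) ^ 2
      * ((Ln (z / 2) - Digamma (of_nat (k + 1))) ^ 2
         - (1/2) * Polygamma 1 (of_nat (k + 1)) + (complex_of_real pi) ^ 2 / 4))"

definition lommelS :: "nat \<Rightarrow> complex \<Rightarrow> complex" where
  "lommelS p z =
     (\<Sum>j<p. (-1) ^ j * z powi (2 * int j - 2 * int p)
          / (2 ^ (2 * j + 2) * pochhammer (- of_nat p) (j + 1) * pochhammer (- of_nat p) (j + 1)))
     + (-1) ^ p * lommelS_m1 z / (2 ^ (2 * p) * (of_nat (fact p)) ^ 2)"

(* F is an analytic continuation of the principal branch of g to the logarithmic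
   Riemann surface, parametrised by w (the point exp w with argument Im w). *)
definition log_continuation :: "(complex \<Rightarrow> complex) \<Rightarrow> (complex \<Rightarrow> complex) \<Rightarrow> bool" where
  "log_continuation g F \<longleftrightarrow> F holomorphic_on UNIV \<and>
      (\<forall>w. \<bar>Im w\<bar> < pi \<longrightarrow> F w = g (exp w))"

end

theory Submission
  imports Defs "HOL-Complex_Analysis.Complex_Analysis"
begin

(*
  Expanding the square in the series of S_{-1,0} gives
  S_{-1,0}(z) = (L^2 J_0(z) - 2 L B(z) + C(z)) / 2 and Y_0(z) = (2/pi) (L J_0(z) - B(z)),
  where L = log(z/2) and J_0, B, C are entire even functions (power series in z^2 whose
  coefficients grow at most exponentially). Writing z = exp w turns L into w - ln 2 and gives an
  entire continuation; passing to arg z - m pi replaces L by L - m pi i, and the resulting change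
  of the quadratic in L is exactly K''_+ H^(1)_0 + K''_- H^(2)_0. The Laurent polynomial part of
  S_{-2p-1,0} is even, hence unchanged, and every continuation agrees with this one by the
  identity theorem on the strip |Im w| < pi.
*)

definition exp_bounded :: "(nat \<Rightarrow> 'a::real_normed_vector) \<Rightarrow> bool" where
  "exp_bounded d \<longleftrightarrow> (\<exists>M C. \<forall>k. norm (d k) \<le> M * C ^ k)"

lemma exp_boundedE:
  assumes "exp_bounded d"
  obtains M C where "0 \<le> M" "0 \<le> C" "\<And>k. norm (d k) \<le> M * C ^ k"
proof -
  obtain M C where d: "\<And>k. norm (d k) \<le> M * C ^ k"
    using assms unfolding exp_bounded_def by blast
  have "norm (d k) \<le> \<bar>M\<bar> * \<bar>C\<bar> ^ k" for k
    using d[of k] by (metis abs_ge_self abs_mult power_abs order_trans)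
  then show ?thesis using that[of "\<bar>M\<bar>" "\<bar>C\<bar>"] by simp
qed

lemma exp_bounded_add:
  assumes "exp_bounded f" "exp_bounded g"
  shows "exp_bounded (\<lambda>k. f k + g k)"
proof -
  obtain M C where M: "0 \<le> M" "0 \<le> C" and f: "\<And>k. norm (f k) \<le> M * C ^ k"
    using assms(1) by (elim exp_boundedE) blast
  obtain N D where N: "0 \<le> N" "0 \<le> D" and g: "\<And>k. norm (g k) \<le> N * D ^ k"
    using assms(2) by (elim exp_boundedE) blast
  have "norm (f k + g k) \<le> (M + N) * max C D ^ k" for k
  proof -
    have "norm (f k + g k) \<le> norm (f k) + norm (g k)" by (rule norm_triangle_ineq)
    also have "\<dots> \<le> M * C ^ k + N * D ^ k" by (intro add_mono f g)
    also have "\<dots> \<le> M * max C D ^ k + N * max C D ^ k"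
      using M N by (intro add_mono mult_left_mono power_mono) auto
    finally show ?thesis by (simp add: distrib_right)
  qed
  then show ?thesis unfolding exp_bounded_def by blast
qed

lemma exp_bounded_mult:
  fixes f g :: "nat \<Rightarrow> 'a::real_normed_algebra"
  assumes "exp_bounded f" "exp_bounded g"
  shows "exp_bounded (\<lambda>k. f k * g k)"
proof -
  obtain M C where M: "0 \<le> M" "0 \<le> C" and f: "\<And>k. norm (f k) \<le> M * C ^ k"
    using assms(1) by (elim exp_boundedE) blast
  obtain N D where g: "\<And>k. norm (g k) \<le> N * D ^ k"
    using assms(2) by (elim exp_boundedE) blast
  have "norm (f k * g k) \<le> (M * N) * (C * D) ^ k" for k
  proof -
    have "norm (f k * g k) \<le> norm (f k) * norm (g k)" by (rule norm_mult_ineq)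
    also have "\<dots> \<le> (M * C ^ k) * (N * D ^ k)"
      using f g M by (intro mult_mono) auto
    finally show ?thesis by (simp add: power_mult_distrib mult_ac)
  qed
  then show ?thesis unfolding exp_bounded_def by blast
qed

lemma exp_bounded_const: "exp_bounded (\<lambda>_. c)"
  unfolding exp_bounded_def by (rule exI[of _ "norm c"], rule exI[of _ 1]) simp

lemma exp_bounded_linear:
  assumes "\<And>k. norm (d k) \<le> A + B * real k"
  shows "exp_bounded d"
proof -
  have "norm (d k) \<le> (\<bar>A\<bar> + \<bar>B\<bar>) * 2 ^ k" for k
  proof -
    have "real (Suc k) \<le> real (2 ^ k)"
      using less_exp[of k] by (simp only: of_nat_le_iff Suc_le_eq)
    then have "real k + 1 \<le> 2 ^ k" by simp
    have "norm (d k) \<le> \<bar>A\<bar> + \<bar>B\<bar> * real k"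
      using assms[of k] abs_ge_self[of A] mult_right_mono[OF abs_ge_self[of B], of "real k"] by simp
    also have "\<dots> \<le> (\<bar>A\<bar> + \<bar>B\<bar>) * (real k + 1)"
      by (simp add: algebra_simps)
    also have "\<dots> \<le> (\<bar>A\<bar> + \<bar>B\<bar>) * 2 ^ k"
      using \<open>real k + 1 \<le> 2 ^ k\<close> by (intro mult_left_mono) auto
    finally show ?thesis .
  qed
  then show ?thesis unfolding exp_bounded_def by blast
qed

lemma norm_Polygamma_of_nat_Suc_le:
  "norm (Polygamma n (of_nat (Suc k) :: complex)) \<le> norm (Polygamma n (1::complex)) + fact n * real k"
proof (induction k)
  case (Suc k)
  have nz: "(of_nat (Suc k) :: complex) \<noteq> 0" by (simp del: of_nat_Suc)
  have "norm ((-1) ^ n * fact n / (of_nat (Suc k) :: complex) ^ Suc n) \<le> fact n"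
  proof -
    have "1 \<le> real (Suc k) ^ Suc n" by (rule one_le_power) simp
    then show ?thesis by (simp add: norm_divide norm_mult norm_power field_simps del: of_nat_Suc)
  qed
  then have "norm (Polygamma n (of_nat (Suc k) + 1 :: complex))
               \<le> norm (Polygamma n (of_nat (Suc k) :: complex)) + fact n"
    using Polygamma_plus1[OF nz, of n] norm_triangle_ineq by (metis add_left_mono order_trans)
  then show ?case using Suc.IH by (simp add: algebra_simps)
qed simp

lemma exp_bounded_Polygamma_of_nat: "exp_bounded (\<lambda>k. Polygamma n (of_nat (Suc k) :: complex))"
  by (rule exp_bounded_linear, rule norm_Polygamma_of_nat_Suc_le)

definition bessel_series :: "(nat \<Rightarrow> complex) \<Rightarrow> complex \<Rightarrow> complex" where
  "bessel_series d z = (\<Sum>k. (-1) ^ k * (z / 2) ^ (2 * k) / (of_nat (fact k)) ^ 2 * d k)"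

definition bessel_coeff :: "(nat \<Rightarrow> complex) \<Rightarrow> nat \<Rightarrow> complex" where
  "bessel_coeff d k = (-1) ^ k / (4 ^ k * (of_nat (fact k)) ^ 2) * d k"

lemma bessel_series_term_eq:
  "(-1) ^ k * (z / 2) ^ (2 * k) / (of_nat (fact k)) ^ 2 * d k = bessel_coeff d k * (z ^ 2) ^ k"
  by (simp add: bessel_coeff_def power_mult power_divide)

lemma bessel_series_eq_power_series: "bessel_series d z = (\<Sum>k. bessel_coeff d k * (z ^ 2) ^ k)"
  unfolding bessel_series_def bessel_series_term_eq ..

lemma bessel_series_square_eq: "z ^ 2 = y ^ 2 \<Longrightarrow> bessel_series d z = bessel_series d y"
  by (simp add: bessel_series_eq_power_series)

lemma summable_bessel_coeff:
  assumes "exp_bounded d"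
  shows "summable (\<lambda>k. bessel_coeff d k * u ^ k)"
proof -
  obtain M C where M: "0 \<le> M" "0 \<le> C" and d: "\<And>k. norm (d k) \<le> M * C ^ k"
    using assms by (elim exp_boundedE) blast
  show ?thesis
  proof (rule summable_comparison_test)
    show "summable (\<lambda>k. M * (inverse (fact k) * (C * norm u / 4) ^ k))"
      by (intro summable_mult summable_exp)
    have "norm (bessel_coeff d k * u ^ k) \<le> M * (inverse (fact k) * (C * norm u / 4) ^ k)" for k
    proof -
      have "norm (bessel_coeff d k * u ^ k) = norm (d k) * norm u ^ k / (4 ^ k * (fact k) ^ 2)"
        by (simp add: bessel_coeff_def norm_mult norm_divide norm_power)
      also have "\<dots> \<le> M * C ^ k * norm u ^ k / (4 ^ k * fact k)"
        using d[of k] M by (intro frac_le mult_right_mono) (auto simp: power2_eq_square)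
      also have "\<dots> = M * (inverse (fact k) * (C * norm u / 4) ^ k)"
        by (simp add: field_simps power_mult_distrib)
      finally show ?thesis .
    qed
    then show "\<exists>N. \<forall>k\<ge>N. norm (bessel_coeff d k * u ^ k) \<le> M * (inverse (fact k) * (C * norm u / 4) ^ k)"
      by blast
  qed
qed

lemma bessel_series_sums:
  assumes "exp_bounded d"
  shows "(\<lambda>k. (-1) ^ k * (z / 2) ^ (2 * k) / (of_nat (fact k)) ^ 2 * d k) sums bessel_series d z"
  unfolding bessel_series_def bessel_series_term_eq
  using summable_bessel_coeff[OF assms] by (rule summable_sums)

lemma holomorphic_bessel_series:
  assumes "exp_bounded d"
  shows "bessel_series d holomorphic_on UNIV"
proof -
  have "(\<lambda>u. \<Sum>k. bessel_coeff d k * u ^ k) holomorphic_on UNIV"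
    unfolding holomorphic_on_def field_differentiable_def
    using termdiffs_strong_converges_everywhere[OF summable_bessel_coeff[OF assms]] by blast
  then have "((\<lambda>u. \<Sum>k. bessel_coeff d k * u ^ k) \<circ> (\<lambda>z. z ^ 2)) holomorphic_on UNIV"
    by (intro holomorphic_on_compose holomorphic_intros) (auto intro: holomorphic_on_subset)
  then show ?thesis by (simp add: o_def bessel_series_eq_power_series[abs_def])
qed

definition psi_coeff :: "nat \<Rightarrow> complex" where
  "psi_coeff k = Digamma (of_nat (k + 1))"

definition lommel_coeff :: "nat \<Rightarrow> complex" where
  "lommel_coeff k =
     psi_coeff k ^ 2 - (1/2) * Polygamma 1 (of_nat (k + 1)) + (complex_of_real pi) ^ 2 / 4"

lemma exp_bounded_psi_coeff: "exp_bounded psi_coeff"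
  unfolding psi_coeff_def[abs_def] using exp_bounded_Polygamma_of_nat[of 0] by simp

lemma exp_bounded_lommel_coeff: "exp_bounded lommel_coeff"
proof -
  have eq: "lommel_coeff = (\<lambda>k. psi_coeff k * psi_coeff k
          + ((- 1/2) * Polygamma 1 (of_nat (Suc k)) + (complex_of_real pi) ^ 2 / 4))"
    by (auto simp: lommel_coeff_def power2_eq_square)
  show ?thesis
    unfolding eq by (intro exp_bounded_add exp_bounded_mult exp_bounded_const exp_bounded_psi_coeff
        exp_bounded_Polygamma_of_nat)
qed

lemma besselJ0_eq_bessel_series: "besselJ0 = bessel_series (\<lambda>_. 1)"
  unfolding besselJ0_def[abs_def] bessel_series_def by simp

lemma besselY0_eq:
  "besselY0 z = (2 / complex_of_real pi) * (Ln (z / 2) * besselJ0 z - bessel_series psi_coeff z)"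
proof -
  let ?a = "\<lambda>k. (-1) ^ k * (z / 2) ^ (2 * k) / (of_nat (fact k)) ^ 2 :: complex"
  have "(\<lambda>k. Ln (z / 2) * (?a k * 1) - ?a k * psi_coeff k)
          sums (Ln (z / 2) * besselJ0 z - bessel_series psi_coeff z)"
    unfolding besselJ0_eq_bessel_series
    by (intro sums_diff sums_mult bessel_series_sums exp_bounded_const exp_bounded_psi_coeff)
  moreover have "(\<lambda>k. Ln (z / 2) * (?a k * 1) - ?a k * psi_coeff k)
                   = (\<lambda>k. ?a k * (Ln (z / 2) - Digamma (of_nat (k + 1))))"
    by (simp add: psi_coeff_def field_simps)
  ultimately show ?thesis
    unfolding besselY0_def by (simp add: sums_iff)
qed

definition lommel_m1_log :: "complex \<Rightarrow> complex \<Rightarrow> complex" where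
  "lommel_m1_log L z =
     (1/2) * (L ^ 2 * besselJ0 z - 2 * L * bessel_series psi_coeff z + bessel_series lommel_coeff z)"

lemma lommelS_m1_eq: "lommelS_m1 z = lommel_m1_log (Ln (z / 2)) z"
proof -
  let ?a = "\<lambda>k. (-1) ^ k * (z / 2) ^ (2 * k) / (of_nat (fact k)) ^ 2 :: complex"
  let ?L = "Ln (z / 2)"
  have "(\<lambda>k. ?L ^ 2 * (?a k * 1) - 2 * ?L * (?a k * psi_coeff k) + ?a k * lommel_coeff k)
          sums (?L ^ 2 * besselJ0 z - 2 * ?L * bessel_series psi_coeff z + bessel_series lommel_coeff z)"
    unfolding besselJ0_eq_bessel_series
    by (intro sums_add sums_diff sums_mult bessel_series_sums
        exp_bounded_const exp_bounded_psi_coeff exp_bounded_lommel_coeff)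
  moreover have "(\<lambda>k. ?L ^ 2 * (?a k * 1) - 2 * ?L * (?a k * psi_coeff k) + ?a k * lommel_coeff k)
      = (\<lambda>k. ?a k * ((?L - Digamma (of_nat (k + 1))) ^ 2
                      - (1/2) * Polygamma 1 (of_nat (k + 1)) + (complex_of_real pi) ^ 2 / 4))"
    by (simp add: psi_coeff_def lommel_coeff_def power2_eq_square algebra_simps)
  ultimately show ?thesis
    unfolding lommelS_m1_def lommel_m1_log_def by (simp add: sums_iff)
qed

lemma lommel_m1_log_square_eq: "z ^ 2 = y ^ 2 \<Longrightarrow> lommel_m1_log L z = lommel_m1_log L y"
  unfolding lommel_m1_log_def besselJ0_eq_bessel_series by (metis bessel_series_square_eq)

lemma lommel_m1_log_shift:
  fixes m :: complex
  shows "lommel_m1_log (Ln (z / 2) - m * complex_of_real pi * \<i>) z =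
           lommelS_m1 z
           + (- m * complex_of_real pi ^ 2 * (m + 1) / 4) * hankel1_0 z
           + (- m * complex_of_real pi ^ 2 * (m - 1) / 4) * hankel2_0 z"
  unfolding lommelS_m1_eq lommel_m1_log_def hankel1_0_def hankel2_0_def besselY0_eq
  by (simp add: field_simps power2_eq_square)

definition lommelS_poly :: "nat \<Rightarrow> complex \<Rightarrow> complex" where
  "lommelS_poly p z = (\<Sum>j<p. (-1) ^ j * z powi (2 * int j - 2 * int p)
     / (2 ^ (2 * j + 2) * pochhammer (- of_nat p) (j + 1) * pochhammer (- of_nat p) (j + 1)))"

lemma lommelS_eq:
  "lommelS p z = lommelS_poly p z + (-1) ^ p * lommelS_m1 z / (2 ^ (2 * p) * (of_nat (fact p)) ^ 2)"
  unfolding lommelS_def lommelS_poly_def ..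

lemma lommelS_poly_square_eq:
  assumes "z ^ 2 = y ^ 2"
  shows "lommelS_poly p z = lommelS_poly p y"
proof -
  have "x powi (2 * int j - 2 * int p) = (x ^ 2) powi (int j - int p)" for x :: complex and j
  proof -
    have "x powi (2 * (int j - int p)) = (x powi 2) powi (int j - int p)"
      by (rule power_int_mult)
    then show ?thesis by (simp add: right_diff_distrib)
  qed
  then show ?thesis unfolding lommelS_poly_def by (simp only: assms)
qed

definition lommelS_log :: "nat \<Rightarrow> complex \<Rightarrow> complex" where
  "lommelS_log p w = lommelS_poly p (exp w)
     + (-1) ^ p * lommel_m1_log (w - of_real (ln 2)) (exp w) / (2 ^ (2 * p) * (of_nat (fact p)) ^ 2)"

lemma holomorphic_lommelS_log: "lommelS_log p holomorphic_on UNIV"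
proof -
  have exp_series: "(\<lambda>w. bessel_series d (exp w)) holomorphic_on UNIV" if "exp_bounded d" for d
    using holomorphic_on_compose[OF holomorphic_on_exp
        holomorphic_on_subset[OF holomorphic_bessel_series[OF that]]]
    by (simp add: o_def)
  show ?thesis
    unfolding lommelS_log_def lommelS_poly_def lommel_m1_log_def besselJ0_eq_bessel_series
    by (intro holomorphic_intros holomorphic_on_power_int exp_series exp_bounded_const
        exp_bounded_psi_coeff exp_bounded_lommel_coeff) auto
qed

lemma Ln_exp_half:
  assumes "\<bar>Im w\<bar> < pi"
  shows "Ln (exp w / 2) = w - of_real (ln 2)"
proof -
  have "exp w / 2 = exp (w - of_real (ln 2))"
    by (simp add: exp_diff exp_of_real)
  then show ?thesis using assms by simp
qed

lemma log_continuation_lommelS: "log_continuation (lommelS p) (lommelS_log p)"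
  unfolding log_continuation_def
  by (simp add: holomorphic_lommelS_log lommelS_log_def lommelS_eq lommelS_m1_eq Ln_exp_half)

lemma log_continuation_unique:
  assumes "log_continuation g F" "log_continuation g G"
  shows "F = G"
proof
  fix z
  show "F z = G z"
  proof (rule analytic_continuation_open[where s = "{w. \<bar>Im w\<bar> < pi}" and s' = UNIV and f = F and g = G])
    show "open {w::complex. \<bar>Im w\<bar> < pi}"
      by (intro open_Collect_less continuous_intros)
    have "(0::complex) \<in> {w. \<bar>Im w\<bar> < pi}" by simp
    then show "{w::complex. \<bar>Im w\<bar> < pi} \<noteq> {}" by blast
  qed (use assms in \<open>auto simp: log_continuation_def\<close>)
qed

lemma exp_minus_int_pi_i_square: "exp (w - of_int m * of_real pi * \<i>) ^ 2 = exp w ^ 2"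
proof -
  let ?v = "w - of_int m * of_real pi * \<i>"
  have "exp ?v ^ 2 = exp (?v + ?v)"
    by (simp only: power2_eq_square exp_add)
  also have "?v + ?v = 2 * w + \<i> * (of_int (- m) * (of_real pi * 2))"
    by (simp add: algebra_simps)
  also have "exp \<dots> = exp (w + w)"
    using exp_plus_2pin[of "2 * w" "- m"] by (simp only: mult_2)
  finally show ?thesis
    by (simp only: power2_eq_square exp_add)
qed

lemma distribute_quotient:
  fixes a s S K H K' H' D :: "'a::field"
  shows "a + s * (S + K * H + K' * H') / D = a + s * S / D + s * K / D * H + s * K' / D * H'"
  by (simp add: add_divide_distrib distrib_left mult.assoc)

theorem lemma3p8:
  fixes p :: nat and m :: int and \<zeta> :: complex
  assumes "\<zeta> \<noteq> 0" and "- pi < Arg \<zeta>" and "Arg \<zeta> < pi"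
  shows "(\<exists>F. log_continuation (lommelS p) F) \<and>
    (\<forall>F. log_continuation (lommelS p) F \<longrightarrow>
       F (Ln \<zeta> - of_int m * complex_of_real pi * \<i>) =
         lommelS p \<zeta>
         + (-1) ^ p * (- of_int m * complex_of_real pi ^ 2 * (of_int m + 1) / 4)
             / (2 ^ (2 * p) * (of_nat (fact p)) ^ 2) * hankel1_0 \<zeta>
         + (-1) ^ p * (- of_int m * complex_of_real pi ^ 2 * (of_int m - 1) / 4)
             / (2 ^ (2 * p) * (of_nat (fact p)) ^ 2) * hankel2_0 \<zeta>)"
proof (intro conjI allI impI)
  show "\<exists>F. log_continuation (lommelS p) F"
    using log_continuation_lommelS by blast
next
  fix F assume "log_continuation (lommelS p) F"
  then have F: "F = lommelS_log p"
    using log_continuation_lommelS by (rule log_continuation_unique)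
  let ?w = "Ln \<zeta> - of_int m * complex_of_real pi * \<i>"
  have "\<bar>Im (Ln \<zeta>)\<bar> < pi"
    using assms by (simp add: Arg_def abs_less_iff)
  then have shifted_log: "?w - of_real (ln 2) = Ln (\<zeta> / 2) - of_int m * complex_of_real pi * \<i>"
    using Ln_exp_half[of "Ln \<zeta>"] assms(1) by simp
  have sq: "exp ?w ^ 2 = \<zeta> ^ 2"
    using exp_minus_int_pi_i_square[of "Ln \<zeta>" m] assms(1) by simp
  have "F ?w = lommelS_poly p \<zeta> + (-1) ^ p
          * lommel_m1_log (Ln (\<zeta> / 2) - of_int m * complex_of_real pi * \<i>) \<zeta>
          / (2 ^ (2 * p) * (of_nat (fact p)) ^ 2)"
    unfolding F lommelS_log_def shifted_log
    by (simp only: lommelS_poly_square_eq[OF sq] lommel_m1_log_square_eq[OF sq])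
  also have "\<dots> = lommelS_poly p \<zeta> + (-1) ^ p
          * (lommelS_m1 \<zeta>
             + (- of_int m * complex_of_real pi ^ 2 * (of_int m + 1) / 4) * hankel1_0 \<zeta>
             + (- of_int m * complex_of_real pi ^ 2 * (of_int m - 1) / 4) * hankel2_0 \<zeta>)
          / (2 ^ (2 * p) * (of_nat (fact p)) ^ 2)"
    by (simp only: lommel_m1_log_shift)
  also have "\<dots> = lommelS p \<zeta>
         + (-1) ^ p * (- of_int m * complex_of_real pi ^ 2 * (of_int m + 1) / 4)
             / (2 ^ (2 * p) * (of_nat (fact p)) ^ 2) * hankel1_0 \<zeta>
         + (-1) ^ p * (- of_int m * complex_of_real pi ^ 2 * (of_int m - 1) / 4)
             / (2 ^ (2 * p) * (of_nat (fact p)) ^ 2) * hankel2_0 \<zeta>"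
    unfolding lommelS_eq by (rule distribute_quotient)
  finally show "F ?w = \<dots>" .
qed

end
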